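(* Let $X$ be a summable vertex parameter, and let $G=\bigsqcup_{i=1}^N G_i$ be the disjoint union of graphs $G_1,\dots,G_N$. Then $\mathcal{R}^{\mathrm{TE}}_X(G)\cong G_1'\,\square\,\cdots\,\square\, G_N'$ where $G_i'=\mathcal{R}^{\mathrm{TE}}_X(G_i)$, and $\mathcal{R}^{\mathrm{TS}}_X(G)\cong \mathcal{R}^{\mathrm{TS}}_X(G_1)\,\square\,\cdots\,\square\,\mathcal{R}^{\mathrm{TS}}_X(G_N)$, where $\square$ denotes the Cartesian product of graphs.
   Context: All graphs are finite and simple. A graph parameter $X$ is a vertex parameter defined by property $x$ if there is a property $x$ of vertex subsets such that for every graph $G$, $X(G)$ equals either (for every graph) the maximum, or (for every graph) the minimum, of $|B|$ over all $B\subseteq V(G)$ having property $x$ in $G$. $X$ is summable if for every graph $G$: $B\subseteq V(G)$ has property $x$ in $G$ if and only if $B=\bigcup_{C}B_C$ over the connected components $C$ of $G$, where each $B_C\subseteq V(C)$ has property $x$ in $C$. The token exchange $X$-reconfiguration graph $\mathcal{R}^{\mathrm{TE}}_X(G)$ has as vertices all $S\subseteq V(G)$ with $|S|=X(G)$ having property $x$ in $G$, with $S_1S_2$ an edge iff there exist $v_1\in S_1\setminus S_2$, $v_2\in S_2\setminus S_1$ with $S_1\setminus\{v_1\}=S_2\setminus\{v_2\}$. The token sliding graph $\mathcal{R}^{\mathrm{TS}}_X(G)$ has the same vertices, with the additional requirement $v_1v_2\in E(G)$ for adjacency. *)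

theory Defs
  imports Main "HOL-Library.FuncSet"
begin

type_synonym 'v graph = "'v set \<times> 'v set set"

abbreviation verts :: "'v graph \<Rightarrow> 'v set" where "verts G \<equiv> fst G"
abbreviation edges :: "'v graph \<Rightarrow> 'v set set" where "edges G \<equiv> snd G"

definition graph :: "'v graph \<Rightarrow> bool" where
  "graph G \<longleftrightarrow> finite (verts G) \<and>
     (\<forall>e\<in>edges G. \<exists>u v. e = {u, v} \<and> u \<noteq> v \<and> u \<in> verts G \<and> v \<in> verts G)"

definition adj :: "'v graph \<Rightarrow> 'v \<Rightarrow> 'v \<Rightarrow> bool" where
  "adj G u v \<longleftrightarrow> {u, v} \<in> edges G"

definition induced :: "'v graph \<Rightarrow> 'v set \<Rightarrow> 'v graph" where
  "induced G C = (C, {e \<in> edges G. e \<subseteq> C})"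

definition comp_sets :: "'v graph \<Rightarrow> 'v set set" where
  "comp_sets G = {{v. (adj G)\<^sup>*\<^sup>* u v} | u. u \<in> verts G}"

definition components :: "'v graph \<Rightarrow> 'v graph set" where
  "components G = induced G ` comp_sets G"

text \<open>A vertex parameter is given by a flag (maximum or minimum) and a property
  x of vertex subsets; x G B is only consulted for B \<subseteq> V(G).\<close>
definition param_val :: "bool \<Rightarrow> ('v graph \<Rightarrow> 'v set \<Rightarrow> bool) \<Rightarrow> 'v graph \<Rightarrow> nat" where
  "param_val is_max x G =
     (if is_max then Max {card B | B. B \<subseteq> verts G \<and> x G B}
      else Min {card B | B. B \<subseteq> verts G \<and> x G B})"

definition summable :: "('v graph \<Rightarrow> 'v set \<Rightarrow> bool) \<Rightarrow> bool" where
  "summable x \<longleftrightarrow> (\<forall>G. graph G \<longrightarrow> (\<forall>B. B \<subseteq> verts G \<longrightarrow>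
     (x G B \<longleftrightarrow> (\<exists>f. (\<forall>C\<in>components G. f C \<subseteq> verts C \<and> x C (f C))
                      \<and> B = (\<Union>C\<in>components G. f C)))))"

definition sol_sets :: "bool \<Rightarrow> ('v graph \<Rightarrow> 'v set \<Rightarrow> bool) \<Rightarrow> 'v graph \<Rightarrow> 'v set set" where
  "sol_sets is_max x G = {S. S \<subseteq> verts G \<and> x G S \<and> card S = param_val is_max x G}"

definition R_TE :: "bool \<Rightarrow> ('v graph \<Rightarrow> 'v set \<Rightarrow> bool) \<Rightarrow> 'v graph \<Rightarrow> 'v set graph" where
  "R_TE is_max x G = (sol_sets is_max x G,
     {{S1, S2} | S1 S2. S1 \<in> sol_sets is_max x G \<and> S2 \<in> sol_sets is_max x G \<and>
        (\<exists>v1\<in>S1 - S2. \<exists>v2\<in>S2 - S1. S1 - {v1} = S2 - {v2})})"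

definition R_TS :: "bool \<Rightarrow> ('v graph \<Rightarrow> 'v set \<Rightarrow> bool) \<Rightarrow> 'v graph \<Rightarrow> 'v set graph" where
  "R_TS is_max x G = (sol_sets is_max x G,
     {{S1, S2} | S1 S2. S1 \<in> sol_sets is_max x G \<and> S2 \<in> sol_sets is_max x G \<and>
        (\<exists>v1\<in>S1 - S2. \<exists>v2\<in>S2 - S1. S1 - {v1} = S2 - {v2} \<and> {v1, v2} \<in> edges G)})"

text \<open>Disjoint union of the graphs H 1, ..., H N (vertex sets assumed pairwise disjoint).\<close>
definition union_graph :: "nat \<Rightarrow> (nat \<Rightarrow> 'v graph) \<Rightarrow> 'v graph" where
  "union_graph N H = ((\<Union>i\<in>{1..N}. verts (H i)), (\<Union>i\<in>{1..N}. edges (H i)))"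

text \<open>Cartesian product H 1 \<box> ... \<box> H N: tuples (extensional functions on {1..N}),
  adjacent iff they differ in exactly one coordinate, where they are adjacent.\<close>
definition cart_prod :: "nat \<Rightarrow> (nat \<Rightarrow> 'a graph) \<Rightarrow> (nat \<Rightarrow> 'a) graph" where
  "cart_prod N H = (Pi\<^sub>E {1..N} (\<lambda>i. verts (H i)),
     {{f, g} | f g. f \<in> Pi\<^sub>E {1..N} (\<lambda>i. verts (H i)) \<and> g \<in> Pi\<^sub>E {1..N} (\<lambda>i. verts (H i)) \<and>
        (\<exists>j\<in>{1..N}. {f j, g j} \<in> edges (H j) \<and> (\<forall>i\<in>{1..N} - {j}. f i = g i))})"

definition graph_iso :: "'a graph \<Rightarrow> 'b graph \<Rightarrow> bool" where
  "graph_iso G H \<longleftrightarrow> (\<exists>\<phi>. bij_betw \<phi> (verts G) (verts H) \<and>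
     (\<forall>u\<in>verts G. \<forall>v\<in>verts G. {u, v} \<in> edges G \<longleftrightarrow> {\<phi> u, \<phi> v} \<in> edges H))"

end

theory Submission
  imports Defs
begin

text \<open>For a summable parameter, a vertex set of the disjoint union G is feasible iff its trace on
  every part G_i is feasible. Hence the parameter is additive, and the optimal sets of G are exactly
  the unions of optimal sets of the parts; mapping an optimal set S to the tuple of its traces
  S \<inter> V(G_i) is therefore a bijection onto the vertex set of the Cartesian product. A move between
  two optimal sets preserves the size of every trace, so the removed and the added token lie in
  the same part: the move changes exactly one coordinate, by a move of the same kind inside that
  part. This is adjacency in the Cartesian product, for token exchange and token sliding alike.\<close>

definition token_move :: "('v \<Rightarrow> 'v \<Rightarrow> bool) \<Rightarrow> 'v set \<Rightarrow> 'v set \<Rightarrow> bool" where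
  "token_move Q S1 S2 \<longleftrightarrow> (\<exists>v1\<in>S1 - S2. \<exists>v2\<in>S2 - S1. S1 - {v1} = S2 - {v2} \<and> Q v1 v2)"

definition reconf_graph ::
    "('v graph \<Rightarrow> 'v \<Rightarrow> 'v \<Rightarrow> bool) \<Rightarrow> bool \<Rightarrow> ('v graph \<Rightarrow> 'v set \<Rightarrow> bool) \<Rightarrow> 'v graph \<Rightarrow> 'v set graph"
  where
  "reconf_graph Q is_max x G = (sol_sets is_max x G,
     {{S1, S2} | S1 S2. S1 \<in> sol_sets is_max x G \<and> S2 \<in> sol_sets is_max x G \<and> token_move (Q G) S1 S2})"

lemma R_TE_eq_reconf_graph: "R_TE is_max x G = reconf_graph (\<lambda>_ _ _. True) is_max x G"
  unfolding R_TE_def reconf_graph_def token_move_def by simp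

lemma R_TS_eq_reconf_graph: "R_TS is_max x G = reconf_graph (\<lambda>G a b. {a, b} \<in> edges G) is_max x G"
  unfolding R_TS_def reconf_graph_def token_move_def by simp

lemma verts_reconf_graph [simp]: "verts (reconf_graph Q is_max x G) = sol_sets is_max x G"
  by (simp add: reconf_graph_def)

lemma token_move_sym:
  assumes "\<And>a b. Q a b \<Longrightarrow> Q b a" and "token_move Q S1 S2"
  shows "token_move Q S2 S1"
  using assms unfolding token_move_def by metis

lemma doubleton_mem_iff:
  assumes "\<And>a b. P a b \<Longrightarrow> P b a"
  shows "{u, v} \<in> {{a, b} | a b. P a b} \<longleftrightarrow> P u v"
  using assms by (auto simp: doubleton_eq_iff)

lemma edge_reconf_graph_iff:
  assumes "\<And>a b. Q G a b \<Longrightarrow> Q G b a"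
  shows "{S1, S2} \<in> edges (reconf_graph Q is_max x G) \<longleftrightarrow>
    S1 \<in> sol_sets is_max x G \<and> S2 \<in> sol_sets is_max x G \<and> token_move (Q G) S1 S2"
  unfolding reconf_graph_def snd_conv
  by (rule doubleton_mem_iff) (use assms token_move_sym in blast)

lemma edge_cart_prod_iff:
  "{f, g} \<in> edges (cart_prod N R) \<longleftrightarrow>
    f \<in> Pi\<^sub>E {1..N} (\<lambda>i. verts (R i)) \<and> g \<in> Pi\<^sub>E {1..N} (\<lambda>i. verts (R i)) \<and>
    (\<exists>j\<in>{1..N}. {f j, g j} \<in> edges (R j) \<and> (\<forall>i\<in>{1..N} - {j}. f i = g i))"
  unfolding cart_prod_def snd_conv
  by (rule doubleton_mem_iff) (metis insert_commute)

lemma finite_feasible_cards: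
  "finite (verts K) \<Longrightarrow> finite {card B | B. B \<subseteq> verts K \<and> x K B}"
  by (rule finite_subset[of _ "card ` Pow (verts K)"]) auto

lemma param_val_optimal:
  assumes "finite (verts K)" "B \<subseteq> verts K" "x K B"
  shows "if is_max then card B \<le> param_val is_max x K else param_val is_max x K \<le> card B"
proof -
  have "card B \<in> {card B | B. B \<subseteq> verts K \<and> x K B}" using assms(2,3) by blast
  then show ?thesis by (simp add: param_val_def finite_feasible_cards[of K x, OF assms(1)])
qed

lemma sol_sets_nonempty:
  assumes "finite (verts K)" "B \<subseteq> verts K" "x K B"
  shows "sol_sets is_max x K \<noteq> {}"
proof -
  let ?cards = "{card B | B. B \<subseteq> verts K \<and> x K B}"
  have "?cards \<noteq> {}" using assms(2,3) by blast
  note fin = finite_feasible_cards[of K x, OF assms(1)]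
  have "(if is_max then Max ?cards else Min ?cards) \<in> ?cards"
    using Max_in[OF fin \<open>?cards \<noteq> {}\<close>] Min_in[OF fin \<open>?cards \<noteq> {}\<close>] by simp
  then have "param_val is_max x K \<in> ?cards" by (simp only: param_val_def)
  then show ?thesis by (auto simp: sol_sets_def)
qed

lemma param_val_eqI:
  assumes "finite (verts K)" "B \<subseteq> verts K" "x K B" "card B = p"
    and "\<And>B. B \<subseteq> verts K \<Longrightarrow> x K B \<Longrightarrow> if is_max then card B \<le> p else p \<le> card B"
  shows "param_val is_max x K = p"
  using assms finite_feasible_cards[of K x, OF assms(1)]
  by (auto simp: param_val_def intro!: Max_eqI Min_eqI)

lemma rtranclp_eq_on_closed:
  assumes "\<And>a b. a \<in> A \<Longrightarrow> R a b \<longleftrightarrow> S a b" and "\<And>a b. a \<in> A \<Longrightarrow> R a b \<Longrightarrow> b \<in> A"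
    and "u \<in> A"
  shows "R\<^sup>*\<^sup>* u v \<longleftrightarrow> S\<^sup>*\<^sup>* u v"
proof
  show "S\<^sup>*\<^sup>* u v" if "R\<^sup>*\<^sup>* u v"
  proof -
    from that have "v \<in> A \<and> S\<^sup>*\<^sup>* u v"
      by induction (use assms in \<open>auto intro: rtranclp.rtrancl_into_rtrancl\<close>)
    then show ?thesis ..
  qed
  show "R\<^sup>*\<^sup>* u v" if "S\<^sup>*\<^sup>* u v"
  proof -
    from that have "v \<in> A \<and> R\<^sup>*\<^sup>* u v"
      by induction (use assms in \<open>auto intro: rtranclp.rtrancl_into_rtrancl\<close>)
    then show ?thesis ..
  qed
qed

lemma adj_in_verts: "graph K \<Longrightarrow> adj K u v \<Longrightarrow> u \<in> verts K \<and> v \<in> verts K"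
  unfolding graph_def adj_def by (fastforce simp: doubleton_eq_iff)

lemma comp_sets_subset:
  assumes "graph K" "C \<in> comp_sets K"
  shows "C \<subseteq> verts K" "C \<noteq> {}"
proof -
  obtain u where u: "u \<in> verts K" "C = {v. (adj K)\<^sup>*\<^sup>* u v}"
    using assms(2) unfolding comp_sets_def by blast
  have "v \<in> verts K" if "(adj K)\<^sup>*\<^sup>* u v" for v
    using that by induction (use u adj_in_verts[OF assms(1)] in auto)
  then show "C \<subseteq> verts K" using u by blast
  show "C \<noteq> {}" using u by blast
qed

lemma verts_components:
  assumes "graph K" "C \<in> components K"
  shows "verts C \<subseteq> verts K" "verts C \<noteq> {}"
proof -
  obtain D where "D \<in> comp_sets K" "C = induced K D" using assms(2) unfolding components_def by blast
  then show "verts C \<subseteq> verts K" "verts C \<noteq> {}"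
    using comp_sets_subset[OF assms(1)] by (simp_all add: induced_def)
qed

locale disjoint_union =
  fixes N :: nat and H :: "nat \<Rightarrow> 'v graph"
  assumes graph_part: "\<And>i. i \<in> {1..N} \<Longrightarrow> graph (H i)"
    and disjoint_parts: "\<And>i j. i \<in> {1..N} \<Longrightarrow> j \<in> {1..N} \<Longrightarrow> i \<noteq> j \<Longrightarrow>
      verts (H i) \<inter> verts (H j) = {}"
begin

abbreviation "I \<equiv> {1..N}"
abbreviation "V i \<equiv> verts (H i)"
abbreviation "G \<equiv> union_graph N H"

lemma verts_union: "verts G = (\<Union>i\<in>I. V i)"
  and edges_union: "edges G = (\<Union>i\<in>I. edges (H i))"
  by (simp_all add: union_graph_def)

lemma finite_part: "i \<in> I \<Longrightarrow> finite (V i)"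
  using graph_part by (simp add: graph_def)

lemma part_unique: "i \<in> I \<Longrightarrow> j \<in> I \<Longrightarrow> u \<in> V i \<Longrightarrow> u \<in> V j \<Longrightarrow> i = j"
  using disjoint_parts by blast

lemma edge_subset_part: "i \<in> I \<Longrightarrow> e \<in> edges (H i) \<Longrightarrow> e \<subseteq> V i"
  using graph_part unfolding graph_def by fastforce

lemma graph_union: "graph G"
  unfolding graph_def
proof
  show "finite (verts G)" unfolding verts_union using finite_part by blast
  show "\<forall>e\<in>edges G. \<exists>u v. e = {u, v} \<and> u \<noteq> v \<and> u \<in> verts G \<and> v \<in> verts G"
  proof
    fix e assume "e \<in> edges G"
    then obtain i where i: "i \<in> I" "e \<in> edges (H i)" unfolding edges_union by blast
    then obtain u v where "e = {u, v}" "u \<noteq> v" "u \<in> V i" "v \<in> V i"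
      using graph_part[OF i(1)] unfolding graph_def by blast
    then show "\<exists>u v. e = {u, v} \<and> u \<noteq> v \<and> u \<in> verts G \<and> v \<in> verts G"
      unfolding verts_union using i(1) by blast
  qed
qed

lemma edge_union_iff:
  assumes "i \<in> I" "u \<in> e" "u \<in> V i"
  shows "e \<in> edges G \<longleftrightarrow> e \<in> edges (H i)"
  using assms edge_subset_part part_unique unfolding edges_union by blast

lemma reachable_union_iff:
  assumes "i \<in> I" "u \<in> V i"
  shows "(adj G)\<^sup>*\<^sup>* u v \<longleftrightarrow> (adj (H i))\<^sup>*\<^sup>* u v"
proof (rule rtranclp_eq_on_closed[of "V i"])
  show "adj G a b \<longleftrightarrow> adj (H i) a b" if "a \<in> V i" for a b
    unfolding adj_def using edge_union_iff[OF assms(1) _ that] by blast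
  show "b \<in> V i" if "a \<in> V i" "adj G a b" for a b
    using that edge_union_iff[OF assms(1) _ that(1)] edge_subset_part[OF assms(1)]
    unfolding adj_def by blast
qed (rule assms(2))

lemma comp_sets_union: "comp_sets G = (\<Union>i\<in>I. comp_sets (H i))"
proof -
  have "comp_sets G = (\<Union>i\<in>I. {{v. (adj G)\<^sup>*\<^sup>* u v} | u. u \<in> V i})"
    unfolding comp_sets_def verts_union by blast
  also have "\<dots> = (\<Union>i\<in>I. comp_sets (H i))"
    unfolding comp_sets_def using reachable_union_iff by (intro SUP_cong refl) auto
  finally show ?thesis .
qed

lemma induced_union:
  assumes "i \<in> I" "C \<subseteq> V i"
  shows "induced G C = induced (H i) C"
proof -
  have "e \<in> edges (H i)" if k: "k \<in> I" and e: "e \<in> edges (H k)" "e \<subseteq> C" for k e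
  proof -
    obtain u where "u \<in> e" using k e(1) graph_part unfolding graph_def by blast
    then have "k = i" using part_unique[OF k assms(1)] edge_subset_part k e assms(2) by blast
    then show ?thesis using e(1) by simp
  qed
  then show ?thesis unfolding induced_def edges_union using assms(1) by blast
qed

lemma components_union: "components G = (\<Union>i\<in>I. components (H i))"
proof -
  have "induced G ` comp_sets (H i) = components (H i)" if "i \<in> I" for i
    unfolding components_def
    using that comp_sets_subset(1)[OF graph_part[OF that]] induced_union by (intro image_cong) auto
  then show ?thesis unfolding components_def comp_sets_union image_UN by simp
qed

lemma component_part_unique:
  assumes "i \<in> I" "j \<in> I" "C \<in> components (H i)" "C \<in> components (H j)"
  shows "i = j"
proof -
  obtain u where "u \<in> verts C" using verts_components(2)[OF graph_part assms(3)] assms(1) by blast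
  then show ?thesis
    using verts_components(1) graph_part assms part_unique by blast
qed

lemma Union_parts: "B \<subseteq> verts G \<Longrightarrow> (\<Union>i\<in>I. B \<inter> V i) = B"
  unfolding verts_union by blast

lemma Union_Int_part:
  assumes "\<And>i. i \<in> I \<Longrightarrow> B i \<subseteq> V i" "j \<in> I"
  shows "(\<Union>i\<in>I. B i) \<inter> V j = B j"
proof (intro equalityI subsetI)
  fix u assume "u \<in> (\<Union>i\<in>I. B i) \<inter> V j"
  then obtain i where "i \<in> I" "u \<in> B i" "u \<in> V j" by blast
  moreover from this have "i = j" using assms part_unique by blast
  ultimately show "u \<in> B j" by simp
qed (use assms in blast)

lemma card_parts:
  assumes "B \<subseteq> verts G"
  shows "card B = (\<Sum>i\<in>I. card (B \<inter> V i))"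
proof -
  have "card B = card (\<Union>i\<in>I. B \<inter> V i)" using Union_parts[OF assms] by simp
  also have "\<dots> = (\<Sum>i\<in>I. card (B \<inter> V i))"
    by (intro card_UN_disjoint) (simp, use finite_part in blast, use disjoint_parts in blast)
  finally show ?thesis .
qed

lemma Diff_singleton_eq_iff_parts:
  assumes "S1 \<subseteq> verts G" "S2 \<subseteq> verts G"
  shows "S1 - {v1} = S2 - {v2} \<longleftrightarrow> (\<forall>i\<in>I. S1 \<inter> V i - {v1} = S2 \<inter> V i - {v2})"
proof
  assume parts: "\<forall>i\<in>I. S1 \<inter> V i - {v1} = S2 \<inter> V i - {v2}"
  have "S1 - {v1} = (\<Union>i\<in>I. S1 \<inter> V i - {v1})" using Union_parts[OF assms(1)] by blast
  also have "\<dots> = (\<Union>i\<in>I. S2 \<inter> V i - {v2})" using parts by simp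
  also have "\<dots> = S2 - {v2}" using Union_parts[OF assms(2)] by blast
  finally show "S1 - {v1} = S2 - {v2}" .
qed blast

end

lemma exchange_stays_in_part:
  assumes "S1 - {v1} = S2 - {v2}" "v1 \<in> S1 - S2" "v2 \<in> S2 - S1" "v1 \<in> A"
    and "finite (S1 \<inter> A)" "card (S1 \<inter> A) = card (S2 \<inter> A)"
  shows "v2 \<in> A"
proof (rule ccontr)
  assume "v2 \<notin> A"
  then have "S2 \<inter> A = S1 \<inter> A - {v1}" using assms(1-3) by blast
  moreover have "card (S1 \<inter> A - {v1}) < card (S1 \<inter> A)"
    by (rule card_Diff1_less) (use assms(2,4,5) in auto)
  ultimately have "card (S2 \<inter> A) < card (S1 \<inter> A)" by simp
  then show False using assms(6) by simp
qed

lemma summableD: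
  "summable x \<Longrightarrow> graph K \<Longrightarrow> B \<subseteq> verts K \<Longrightarrow>
    x K B \<longleftrightarrow> (\<exists>f. (\<forall>C\<in>components K. f C \<subseteq> verts C \<and> x C (f C)) \<and> B = (\<Union>C\<in>components K. f C))"
  unfolding summable_def by blast

locale summable_union = disjoint_union N H for N :: nat and H :: "nat \<Rightarrow> 'v graph" +
  fixes x :: "'v graph \<Rightarrow> 'v set \<Rightarrow> bool"
  assumes summable: "summable x"
begin

lemma feasible_union_partD:
  assumes B: "B \<subseteq> verts G" and feasible: "x G B" and i: "i \<in> I"
  shows "x (H i) (B \<inter> V i)"
proof -
  obtain f where f: "\<forall>C\<in>components G. f C \<subseteq> verts C \<and> x C (f C)"
    and B_eq: "B = (\<Union>C\<in>components G. f C)"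
    using feasible unfolding summableD[OF summable graph_union B] by blast
  have f_part: "(\<Union>C\<in>components (H k). f C) \<subseteq> V k" if k: "k \<in> I" for k
  proof (intro UN_least)
    fix C assume C: "C \<in> components (H k)"
    then have "f C \<subseteq> verts C" using f k unfolding components_union by blast
    then show "f C \<subseteq> V k" using verts_components(1)[OF graph_part[OF k] C] by blast
  qed
  have "B = (\<Union>k\<in>I. \<Union>C\<in>components (H k). f C)"
    unfolding B_eq components_union by simp
  then have "B \<inter> V i = (\<Union>C\<in>components (H i). f C)"
    using Union_Int_part[OF f_part i] by simp
  moreover have "\<forall>C\<in>components (H i). f C \<subseteq> verts C \<and> x C (f C)"
    using f i unfolding components_union by blast
  ultimately show "x (H i) (B \<inter> V i)"
    unfolding summableD[OF summable graph_part[OF i] Int_lower2] by (intro exI[of _ f]) simp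
qed

lemma feasible_unionI:
  assumes B: "B \<subseteq> verts G" and parts: "\<forall>i\<in>I. x (H i) (B \<inter> V i)"
  shows "x G B"
proof -
  have "\<forall>i\<in>I. \<exists>F. (\<forall>C\<in>components (H i). F C \<subseteq> verts C \<and> x C (F C))
      \<and> B \<inter> V i = (\<Union>C\<in>components (H i). F C)"
  proof
    fix i assume i: "i \<in> I"
    show "\<exists>F. (\<forall>C\<in>components (H i). F C \<subseteq> verts C \<and> x C (F C))
        \<and> B \<inter> V i = (\<Union>C\<in>components (H i). F C)"
      using bspec[OF parts i] by (rule summableD[OF summable graph_part[OF i] Int_lower2, THEN iffD1])
  qed
  then obtain F where F: "\<forall>i\<in>I. (\<forall>C\<in>components (H i). F i C \<subseteq> verts C \<and> x C (F i C))
      \<and> B \<inter> V i = (\<Union>C\<in>components (H i). F i C)"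
    by (rule bchoice[elim_format]) blast
  define f where "f C = F (THE i. i \<in> I \<and> C \<in> components (H i)) C" for C
  have f_eq: "f C = F i C" if "i \<in> I" "C \<in> components (H i)" for i C
  proof -
    have "(THE i. i \<in> I \<and> C \<in> components (H i)) = i"
      using that component_part_unique by (intro the_equality) blast+
    then show ?thesis by (simp add: f_def)
  qed
  have "\<forall>C\<in>components G. f C \<subseteq> verts C \<and> x C (f C)"
  proof
    fix C assume "C \<in> components G"
    then obtain i where "i \<in> I" "C \<in> components (H i)" unfolding components_union by blast
    then show "f C \<subseteq> verts C \<and> x C (f C)" using F f_eq by simp
  qed
  moreover have "B = (\<Union>C\<in>components G. f C)"
  proof -
    have "B = (\<Union>i\<in>I. B \<inter> V i)" using Union_parts[OF B] by simp
    also have "\<dots> = (\<Union>i\<in>I. \<Union>C\<in>components (H i). f C)"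
      using F f_eq by (intro SUP_cong refl) simp
    also have "\<dots> = (\<Union>C\<in>components G. f C)" unfolding components_union by simp
    finally show ?thesis .
  qed
  ultimately show "x G B"
    unfolding summableD[OF summable graph_union B] by (intro exI[of _ f]) simp
qed

lemma feasible_union_iff:
  "B \<subseteq> verts G \<Longrightarrow> x G B \<longleftrightarrow> (\<forall>i\<in>I. x (H i) (B \<inter> V i))"
  using feasible_union_partD feasible_unionI by blast

lemma finite_verts_union: "finite (verts G)"
  using graph_union by (simp add: graph_def)

lemma param_val_union:
  assumes "\<And>i. i \<in> I \<Longrightarrow> \<exists>B \<subseteq> V i. x (H i) B"
  shows "param_val m x G = (\<Sum>i\<in>I. param_val m x (H i))"
proof -
  have "\<forall>i\<in>I. \<exists>S. S \<in> sol_sets m x (H i)"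
    using assms sol_sets_nonempty finite_part by blast
  then obtain S where S: "\<And>i. i \<in> I \<Longrightarrow> S i \<in> sol_sets m x (H i)" by metis
  then have S_part: "\<And>i. i \<in> I \<Longrightarrow> S i \<subseteq> V i" by (simp add: sol_sets_def)
  define B where "B = (\<Union>i\<in>I. S i)"
  have B: "B \<subseteq> verts G" unfolding B_def verts_union using S_part by blast
  have B_part: "B \<inter> V i = S i" if "i \<in> I" for i
    unfolding B_def using Union_Int_part[OF S_part that] .
  show ?thesis
  proof (rule param_val_eqI[OF finite_verts_union B])
    show "x G B" using feasible_union_iff[OF B] B_part S by (simp add: sol_sets_def)
    show "card B = (\<Sum>i\<in>I. param_val m x (H i))"
      using card_parts[OF B] B_part S by (simp add: sol_sets_def)
    fix B' assume B': "B' \<subseteq> verts G" "x G B'"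
    have "if m then card (B' \<inter> V i) \<le> param_val m x (H i) else param_val m x (H i) \<le> card (B' \<inter> V i)"
      if "i \<in> I" for i
      using param_val_optimal[OF finite_part[OF that]] feasible_union_iff[OF B'(1)] B'(2) that
      by blast
    then show "if m then card B' \<le> (\<Sum>i\<in>I. param_val m x (H i))
        else (\<Sum>i\<in>I. param_val m x (H i)) \<le> card B'"
      unfolding card_parts[OF B'(1)] by (cases m) (auto intro: sum_mono)
  qed
qed

lemma sol_sets_union_if_feasible:
  assumes "\<And>i. i \<in> I \<Longrightarrow> \<exists>B \<subseteq> V i. x (H i) B"
  shows "sol_sets m x G = {S. S \<subseteq> verts G \<and> (\<forall>i\<in>I. S \<inter> V i \<in> sol_sets m x (H i))}"
proof -
  have "S \<in> sol_sets m x G \<longleftrightarrow> S \<subseteq> verts G \<and> (\<forall>i\<in>I. S \<inter> V i \<in> sol_sets m x (H i))"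
    if S: "S \<subseteq> verts G" for S
  proof
    assume sol: "S \<in> sol_sets m x G"
    have feasible: "x (H i) (S \<inter> V i)" if "i \<in> I" for i
      using sol feasible_union_iff[OF S] that by (simp add: sol_sets_def)
    have optimal: "if m then card (S \<inter> V i) \<le> param_val m x (H i)
        else param_val m x (H i) \<le> card (S \<inter> V i)" if "i \<in> I" for i
      using param_val_optimal[OF finite_part[OF that]] feasible[OF that] by blast
    have sum: "(\<Sum>i\<in>I. card (S \<inter> V i)) = (\<Sum>i\<in>I. param_val m x (H i))"
      using sol card_parts[OF S] param_val_union assms by (simp add: sol_sets_def)
    have "card (S \<inter> V i) = param_val m x (H i)" if "i \<in> I" for i
    proof (cases m)
      case True
      then show ?thesis using sum_mono_inv[OF sum _ that] optimal by simp
    next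
      case False
      then show ?thesis using sum_mono_inv[OF sum[symmetric] _ that] optimal by fastforce
    qed
    then show "S \<subseteq> verts G \<and> (\<forall>i\<in>I. S \<inter> V i \<in> sol_sets m x (H i))"
      using S feasible by (simp add: sol_sets_def)
  next
    assume "S \<subseteq> verts G \<and> (\<forall>i\<in>I. S \<inter> V i \<in> sol_sets m x (H i))"
    then show "S \<in> sol_sets m x G"
      using feasible_union_iff[OF S] card_parts[OF S] param_val_union assms
      by (simp add: sol_sets_def)
  qed
  then show ?thesis unfolding sol_sets_def by blast
qed

lemma sol_sets_union:
  "sol_sets m x G = {S. S \<subseteq> verts G \<and> (\<forall>i\<in>I. S \<inter> V i \<in> sol_sets m x (H i))}"
proof (cases "\<forall>i\<in>I. \<exists>B \<subseteq> V i. x (H i) B")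
  case True
  then show ?thesis by (intro sol_sets_union_if_feasible) blast
next
  case False
  (* param_val is then Max or Min of an empty set, but both sides are empty anyway *)
  then obtain j where j: "j \<in> I" "\<not> (\<exists>B \<subseteq> V j. x (H j) B)" by blast
  have "S \<notin> sol_sets m x G" for S
  proof
    assume "S \<in> sol_sets m x G"
    then have "S \<subseteq> verts G" "x G S" by (simp_all add: sol_sets_def)
    then have "x (H j) (S \<inter> V j)" using feasible_union_iff j(1) by blast
    then show False using j(2) by blast
  qed
  moreover have "sol_sets m x (H j) = {}" using j(2) by (auto simp: sol_sets_def)
  ultimately show ?thesis using j(1) by blast
qed

lemma token_move_union_partD:
  assumes Q_local: "\<And>i a b. i \<in> I \<Longrightarrow> a \<in> V i \<Longrightarrow> b \<in> V i \<Longrightarrow> Q G a b \<longleftrightarrow> Q (H i) a b"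
    and S1: "S1 \<in> sol_sets m x G" and S2: "S2 \<in> sol_sets m x G"
    and move: "token_move (Q G) S1 S2"
  shows "\<exists>j\<in>I. token_move (Q (H j)) (S1 \<inter> V j) (S2 \<inter> V j) \<and> (\<forall>i\<in>I - {j}. S1 \<inter> V i = S2 \<inter> V i)"
proof -
  have S: "S1 \<subseteq> verts G" "S2 \<subseteq> verts G" using S1 S2 by (simp_all add: sol_sets_def)
  obtain v1 v2 where v: "v1 \<in> S1 - S2" "v2 \<in> S2 - S1" "S1 - {v1} = S2 - {v2}" "Q G v1 v2"
    using move unfolding token_move_def by blast
  have parts_eq: "S1 \<inter> V i - {v1} = S2 \<inter> V i - {v2}" if "i \<in> I" for i
    using v(3) that unfolding Diff_singleton_eq_iff_parts[OF S] by blast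
  obtain j where j: "j \<in> I" "v1 \<in> V j" using v(1) S(1) unfolding verts_union by blast
  have "card (S1 \<inter> V j) = card (S2 \<inter> V j)"
    using S1 S2 j(1) unfolding sol_sets_union by (simp add: sol_sets_def)
  then have v2: "v2 \<in> V j"
    using exchange_stays_in_part[OF v(3,1,2) j(2)] finite_part[OF j(1)] by simp
  have "token_move (Q (H j)) (S1 \<inter> V j) (S2 \<inter> V j)"
    unfolding token_move_def using v j v2 parts_eq[OF j(1)] Q_local[OF j v2] by blast
  moreover have "S1 \<inter> V i = S2 \<inter> V i" if i: "i \<in> I - {j}" for i
  proof -
    have "v1 \<notin> V i" "v2 \<notin> V i" using part_unique i j v2 by blast+
    then show ?thesis using parts_eq i by blast
  qed
  ultimately show ?thesis using j(1) by blast
qed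

lemma token_move_unionI:
  assumes Q_local: "\<And>i a b. i \<in> I \<Longrightarrow> a \<in> V i \<Longrightarrow> b \<in> V i \<Longrightarrow> Q G a b \<longleftrightarrow> Q (H i) a b"
    and S: "S1 \<subseteq> verts G" "S2 \<subseteq> verts G"
    and j: "j \<in> I" and move: "token_move (Q (H j)) (S1 \<inter> V j) (S2 \<inter> V j)"
    and others: "\<forall>i\<in>I - {j}. S1 \<inter> V i = S2 \<inter> V i"
  shows "token_move (Q G) S1 S2"
proof -
  obtain v1 v2 where v: "v1 \<in> S1 \<inter> V j - S2 \<inter> V j" "v2 \<in> S2 \<inter> V j - S1 \<inter> V j"
    "S1 \<inter> V j - {v1} = S2 \<inter> V j - {v2}" "Q (H j) v1 v2"
    using move unfolding token_move_def by blast
  have "S1 \<inter> V i - {v1} = S2 \<inter> V i - {v2}" if i: "i \<in> I" for i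
  proof (cases "i = j")
    case True
    then show ?thesis using v(3) by simp
  next
    case False
    then have "v1 \<notin> V i" "v2 \<notin> V i" using part_unique i j v(1,2) by blast+
    then show ?thesis using others i False by blast
  qed
  then have "S1 - {v1} = S2 - {v2}" unfolding Diff_singleton_eq_iff_parts[OF S] by blast
  moreover have "Q G v1 v2" using Q_local[OF j] v by blast
  ultimately show ?thesis unfolding token_move_def using v(1,2) by blast
qed

lemma token_move_union_iff:
  assumes Q_local: "\<And>i a b. i \<in> I \<Longrightarrow> a \<in> V i \<Longrightarrow> b \<in> V i \<Longrightarrow> Q G a b \<longleftrightarrow> Q (H i) a b"
    and S1: "S1 \<in> sol_sets m x G" and S2: "S2 \<in> sol_sets m x G"
  shows "token_move (Q G) S1 S2 \<longleftrightarrow>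
    (\<exists>j\<in>I. token_move (Q (H j)) (S1 \<inter> V j) (S2 \<inter> V j) \<and> (\<forall>i\<in>I - {j}. S1 \<inter> V i = S2 \<inter> V i))"
proof -
  have S: "S1 \<subseteq> verts G" "S2 \<subseteq> verts G" using S1 S2 by (simp_all add: sol_sets_def)
  show ?thesis
  proof
    assume "token_move (Q G) S1 S2"
    with Q_local S1 S2 show "\<exists>j\<in>I. token_move (Q (H j)) (S1 \<inter> V j) (S2 \<inter> V j)
        \<and> (\<forall>i\<in>I - {j}. S1 \<inter> V i = S2 \<inter> V i)"
      by (rule token_move_union_partD)
  next
    assume "\<exists>j\<in>I. token_move (Q (H j)) (S1 \<inter> V j) (S2 \<inter> V j)
        \<and> (\<forall>i\<in>I - {j}. S1 \<inter> V i = S2 \<inter> V i)"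
    then obtain j where "j \<in> I" "token_move (Q (H j)) (S1 \<inter> V j) (S2 \<inter> V j)"
      "\<forall>i\<in>I - {j}. S1 \<inter> V i = S2 \<inter> V i" by blast
    with Q_local S show "token_move (Q G) S1 S2" by (rule token_move_unionI)
  qed
qed

definition parts :: "'v set \<Rightarrow> nat \<Rightarrow> 'v set" where
  "parts S = (\<lambda>i\<in>I. S \<inter> V i)"

lemma parts_apply: "i \<in> I \<Longrightarrow> parts S i = S \<inter> V i"
  by (simp add: parts_def)

lemma bij_betw_parts:
  assumes "\<And>i. i \<in> I \<Longrightarrow> F i \<subseteq> Pow (V i)"
  shows "bij_betw parts {S. S \<subseteq> verts G \<and> (\<forall>i\<in>I. S \<inter> V i \<in> F i)} (Pi\<^sub>E I F)"
proof (rule bij_betw_byWitness[where f' = "\<lambda>f. \<Union>i\<in>I. f i"])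
  show "\<forall>S\<in>{S. S \<subseteq> verts G \<and> (\<forall>i\<in>I. S \<inter> V i \<in> F i)}. (\<Union>i\<in>I. parts S i) = S"
    using Union_parts by (simp add: parts_def)
  have part: "f i \<subseteq> V i" if "f \<in> Pi\<^sub>E I F" "i \<in> I" for f i
    using assms PiE_mem[OF that] that(2) by blast
  show "\<forall>f\<in>Pi\<^sub>E I F. parts (\<Union>i\<in>I. f i) = f"
  proof (intro ballI ext)
    fix f i assume f: "f \<in> Pi\<^sub>E I F"
    show "parts (\<Union>i\<in>I. f i) i = f i"
    proof (cases "i \<in> I")
      case True
      then show ?thesis using Union_Int_part[OF part[OF f] True] by (simp add: parts_def)
    next
      case False
      then show ?thesis using PiE_arb[OF f False] by (auto simp: parts_def)
    qed
  qed
  show "parts ` {S. S \<subseteq> verts G \<and> (\<forall>i\<in>I. S \<inter> V i \<in> F i)} \<subseteq> Pi\<^sub>E I F"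
    by (auto simp: parts_def)
  show "(\<lambda>f. \<Union>i\<in>I. f i) ` Pi\<^sub>E I F \<subseteq> {S. S \<subseteq> verts G \<and> (\<forall>i\<in>I. S \<inter> V i \<in> F i)}"
  proof (intro image_subsetI CollectI conjI ballI)
    fix f i assume f: "f \<in> Pi\<^sub>E I F"
    show "(\<Union>i\<in>I. f i) \<subseteq> verts G" unfolding verts_union using part[OF f] by blast
    assume "i \<in> I"
    then show "(\<Union>i\<in>I. f i) \<inter> V i \<in> F i" using Union_Int_part[OF part[OF f]] PiE_mem[OF f] by simp
  qed
qed

lemma reconf_graph_union_iso:
  assumes Q_sym: "\<And>K a b. Q K a b \<Longrightarrow> Q K b a"
    and Q_local: "\<And>i a b. i \<in> I \<Longrightarrow> a \<in> V i \<Longrightarrow> b \<in> V i \<Longrightarrow> Q G a b \<longleftrightarrow> Q (H i) a b"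
  shows "graph_iso (reconf_graph Q m x G) (cart_prod N (\<lambda>i. reconf_graph Q m x (H i)))"
  unfolding graph_iso_def
proof (rule exI[of _ parts], intro conjI ballI)
  have "bij_betw parts (sol_sets m x G) (Pi\<^sub>E I (\<lambda>i. sol_sets m x (H i)))"
    unfolding sol_sets_union by (rule bij_betw_parts) (auto simp: sol_sets_def)
  then show "bij_betw parts (verts (reconf_graph Q m x G))
      (verts (cart_prod N (\<lambda>i. reconf_graph Q m x (H i))))"
    by (simp add: cart_prod_def)
  fix S1 S2 assume "S1 \<in> verts (reconf_graph Q m x G)" "S2 \<in> verts (reconf_graph Q m x G)"
  then have S1: "S1 \<in> sol_sets m x G" and S2: "S2 \<in> sol_sets m x G" by simp_all
  have part_sol: "S1 \<inter> V i \<in> sol_sets m x (H i)" "S2 \<inter> V i \<in> sol_sets m x (H i)" if "i \<in> I" for i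
    using that S1 S2 unfolding sol_sets_union by blast+
  have parts_sol: "parts S1 \<in> Pi\<^sub>E I (\<lambda>i. verts (reconf_graph Q m x (H i)))"
    "parts S2 \<in> Pi\<^sub>E I (\<lambda>i. verts (reconf_graph Q m x (H i)))"
    unfolding parts_def verts_reconf_graph restrict_PiE_iff using part_sol by blast+
  have part_edge: "{S1 \<inter> V j, S2 \<inter> V j} \<in> edges (reconf_graph Q m x (H j))
      \<longleftrightarrow> token_move (Q (H j)) (S1 \<inter> V j) (S2 \<inter> V j)" if "j \<in> I" for j
    by (simp add: edge_reconf_graph_iff[of Q, OF Q_sym] part_sol[OF that])
  have "{S1, S2} \<in> edges (reconf_graph Q m x G) \<longleftrightarrow> token_move (Q G) S1 S2"
    by (simp add: edge_reconf_graph_iff[of Q, OF Q_sym] S1 S2)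
  also have "\<dots> \<longleftrightarrow> (\<exists>j\<in>I. token_move (Q (H j)) (S1 \<inter> V j) (S2 \<inter> V j)
      \<and> (\<forall>i\<in>I - {j}. S1 \<inter> V i = S2 \<inter> V i))"
    by (rule token_move_union_iff[OF Q_local S1 S2])
  also have "\<dots> \<longleftrightarrow> (\<exists>j\<in>I. {parts S1 j, parts S2 j} \<in> edges (reconf_graph Q m x (H j))
      \<and> (\<forall>i\<in>I - {j}. parts S1 i = parts S2 i))"
    by (intro bex_cong conj_cong ball_cong refl) (simp_all add: part_edge parts_apply)
  also have "\<dots> \<longleftrightarrow> {parts S1, parts S2} \<in> edges (cart_prod N (\<lambda>i. reconf_graph Q m x (H i)))"
    unfolding edge_cart_prod_iff using parts_sol by simp
  finally show "{S1, S2} \<in> edges (reconf_graph Q m x G) \<longleftrightarrow>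
      {parts S1, parts S2} \<in> edges (cart_prod N (\<lambda>i. reconf_graph Q m x (H i)))" .
qed

end

theorem theorem3p3:
  fixes is_max :: bool and x :: "'v graph \<Rightarrow> 'v set \<Rightarrow> bool"
    and N :: nat and H :: "nat \<Rightarrow> 'v graph"
  assumes "summable x"
    and "\<And>i. i \<in> {1..N} \<Longrightarrow> graph (H i)"
    and "\<And>i j. i \<in> {1..N} \<Longrightarrow> j \<in> {1..N} \<Longrightarrow> i \<noteq> j \<Longrightarrow> verts (H i) \<inter> verts (H j) = {}"
  shows "graph_iso (R_TE is_max x (union_graph N H)) (cart_prod N (\<lambda>i. R_TE is_max x (H i)))
       \<and> graph_iso (R_TS is_max x (union_graph N H)) (cart_prod N (\<lambda>i. R_TS is_max x (H i)))"
proof -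
  interpret summable_union N H x using assms by unfold_locales
  have "graph_iso (reconf_graph (\<lambda>_ _ _. True) is_max x G)
      (cart_prod N (\<lambda>i. reconf_graph (\<lambda>_ _ _. True) is_max x (H i)))"
    by (rule reconf_graph_union_iso) simp_all
  moreover have "graph_iso (reconf_graph (\<lambda>K a b. {a, b} \<in> edges K) is_max x G)
      (cart_prod N (\<lambda>i. reconf_graph (\<lambda>K a b. {a, b} \<in> edges K) is_max x (H i)))"
  proof (rule reconf_graph_union_iso)
    show "{b, a} \<in> edges K" if "{a, b} \<in> edges K" for K :: "'v graph" and a b
      using that by (simp add: insert_commute)
    show "{a, b} \<in> edges G \<longleftrightarrow> {a, b} \<in> edges (H i)" if "i \<in> I" "a \<in> V i" for i a b
      using edge_union_iff[OF that(1) _ that(2)] by simp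
  qed
  ultimately show ?thesis unfolding R_TE_eq_reconf_graph R_TS_eq_reconf_graph ..
qed

end
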